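(* Let $\Gamma,\Gamma'$ be graphs. The assignment $\Phi\mapsto(s(\Phi),t(\Phi))$ is a bijection between graph morphisms $\Phi:\Gamma\to\Gamma'$ and pairs $(\phi_L,\phi_R)$ of morphisms of $\mathrm{Agg}$, $\phi_L:\mathrm{agg}(\Gamma)\to\mathrm{agg}(\Gamma')$ and $\phi_R:\Gamma/\Gamma\to\Gamma'/\Gamma'$, satisfying $\phi_R\circ\mathrm v_\Gamma=\mathrm v_{\Gamma'}\circ\phi_L$. (In particular, for every $\Phi$ the square with sides $s(\Phi),t(\Phi),\mathrm v_\Gamma,\mathrm v_{\Gamma'}$ commutes.)
   Context: A graph $\Gamma=(F,V,\partial,\imath)$ consists of finite sets $F$ (flags) and $V$ (vertices), a map $\partial:F\to V$ and an involution $\imath$ of $F$. The two-element orbits of $\imath$ are the edges, the fixed points the outer flags. A graph morphism $\phi:\Gamma\to\Gamma'=(F',V',\partial',\imath')$ is a triple $(\phi_V,\phi^F,\imath_\phi)$ with $\phi_V:V\to V'$ surjective, $\phi^F:F'\to F$ injective and $\imath_\phi$ a fixed-point-free involution of $F\setminus\phi^F(F')$, such that: (i) $\phi_V\partial\phi^F=\partial'$ and $\phi_V\partial(f)=\phi_V\partial(\imath_\phi f)$ for $f\notin\phi^F(F')$; (ii) for $f\notin\phi^F(F')$, either $\{f,\imath f\}$ is an edge of $\Gamma$ and $\imath_\phi f=\imath f$, or $f$ and $\imath_\phi f$ are both outer flags of $\Gamma$; (iii) if $f'\in F'$ and $\phi^F(f')$ lies on an edge of $\Gamma$, then $\imath(\phi^F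 f')=\phi^F(\imath' f')$. Composition: $(\psi\phi)_V=\psi_V\phi_V$, $(\psi\phi)^F=\phi^F\psi^F$, $\imath_{\psi\phi}$ equals $\imath_\phi$ off $\phi^F(F')$ and $\phi^F\imath_\psi(\phi^F)^{-1}$ on $\phi^F(F'\setminus\psi^F(F''))$. An aggregate is a graph with $\imath=\mathrm{id}$; $\mathrm{Agg}$ is the full subcategory of aggregates. For a graph $\Gamma$: the total dissection is $\mathrm{agg}(\Gamma)=(F,V,\partial,\mathrm{id})$; the total contraction $\Gamma/\Gamma$ is the aggregate whose vertices are the connected components of $\Gamma$ and whose flags are the outer flags of $\Gamma$, each attached to its component. $\mathrm v_\Gamma:\mathrm{agg}(\Gamma)\to\Gamma/\Gamma$ is the morphism (component map $V\to\pi_0(\Gamma)$, inclusion of outer flags into $F$, involution $\imath$ on the inner flags), i.e. grafting of all edges followed by contraction of all edges. For $\Phi:\Gamma\to\Gamma'$: $s(\Phi):\mathrm{agg}(\Gamma)\to\mathrm{agg}(\Gamma')$ is the triple $(\Phi_V,\Phi^F,\imath_\Phi)$. $t(\Phi):\Gamma/\Gamma\to\Gamma'/\Gamma'$ has vertex map induced by $\Phi_V$ on connected components, flag map the restriction of $\Phi^F$ to the outer flags of $\Gamma'$, and involution on the remaining outer flags $f$ of $\Gamma$ given by $\imath_\Phi(f)$ if $f\notin\Phi^F(F')$ and by $\Phi^F(\imath'((\Phi^F)^{-1}f))$ if $f=\Phi^F(f')$ with $f'$ an inner flag of $\Gamma'$. *)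

theory Defs
  imports Main "HOL-Library.FuncSet"
begin

text \<open>A graph (F, V, bd, inv). Functions are only meaningful on the carriers.\<close>
record ('f, 'v) graph =
  flags :: "'f set"
  verts :: "'v set"
  bd    :: "'f \<Rightarrow> 'v"
  inv   :: "'f \<Rightarrow> 'f"

definition is_graph :: "('f, 'v) graph \<Rightarrow> bool" where
  "is_graph G \<longleftrightarrow> finite (flags G) \<and> finite (verts G)
     \<and> bd G \<in> flags G \<rightarrow> verts G
     \<and> inv G \<in> flags G \<rightarrow> flags G
     \<and> (\<forall>f\<in>flags G. inv G (inv G f) = f)"

definition outer :: "('f, 'v) graph \<Rightarrow> 'f set" where
  "outer G = {f \<in> flags G. inv G f = f}"

definition inner :: "('f, 'v) graph \<Rightarrow> 'f set" where
  "inner G = {f \<in> flags G. inv G f \<noteq> f}"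

definition is_aggregate :: "('f, 'v) graph \<Rightarrow> bool" where
  "is_aggregate G \<longleftrightarrow> is_graph G \<and> (\<forall>f\<in>flags G. inv G f = f)"

text \<open>A morphism G \<rightarrow> G' is a triple (phi_V, phi^F, i_phi); the component functions
  are taken extensional (undefined off their domains) so that equality of
  morphisms is equality of the mathematical triples.\<close>
record ('v1, 'v2, 'f1, 'f2) gmor =
  mV :: "'v1 \<Rightarrow> 'v2"
  mF :: "'f2 \<Rightarrow> 'f1"
  mI :: "'f1 \<Rightarrow> 'f1"

definition is_morphism ::
  "('f1, 'v1) graph \<Rightarrow> ('f2, 'v2) graph \<Rightarrow> ('v1, 'v2, 'f1, 'f2) gmor \<Rightarrow> bool" where
  "is_morphism G G' \<phi> \<longleftrightarrow>
     (let X = flags G - mF \<phi> ` flags G' in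
       mV \<phi> \<in> verts G \<rightarrow>\<^sub>E verts G' \<and> mV \<phi> ` verts G = verts G'
     \<and> mF \<phi> \<in> flags G' \<rightarrow>\<^sub>E flags G \<and> inj_on (mF \<phi>) (flags G')
     \<and> mI \<phi> \<in> X \<rightarrow>\<^sub>E X
     \<and> (\<forall>f\<in>X. mI \<phi> f \<noteq> f \<and> mI \<phi> (mI \<phi> f) = f)
     \<comment> \<open>(i)\<close>
     \<and> (\<forall>f'\<in>flags G'. mV \<phi> (bd G (mF \<phi> f')) = bd G' f')
     \<and> (\<forall>f\<in>X. mV \<phi> (bd G f) = mV \<phi> (bd G (mI \<phi> f)))
     \<comment> \<open>(ii)\<close>
     \<and> (\<forall>f\<in>X. (inv G f \<noteq> f \<and> mI \<phi> f = inv G f)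
               \<or> (inv G f = f \<and> inv G (mI \<phi> f) = mI \<phi> f))
     \<comment> \<open>(iii)\<close>
     \<and> (\<forall>f'\<in>flags G'. inv G (mF \<phi> f') \<noteq> mF \<phi> f' \<longrightarrow>
                        inv G (mF \<phi> f') = mF \<phi> (inv G' f')))"

definition gcomp ::
  "('f1, 'v1) graph \<Rightarrow> ('f2, 'v2) graph \<Rightarrow> ('f3, 'v3) graph \<Rightarrow>
   ('v2, 'v3, 'f2, 'f3) gmor \<Rightarrow> ('v1, 'v2, 'f1, 'f2) gmor \<Rightarrow> ('v1, 'v3, 'f1, 'f3) gmor" where
  "gcomp G G' G'' \<psi> \<phi> =
     \<lparr> mV = restrict (mV \<psi> \<circ> mV \<phi>) (verts G),
       mF = restrict (mF \<phi> \<circ> mF \<psi>) (flags G''),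
       mI = (\<lambda>f. if f \<in> flags G - mF \<phi> ` flags G' then mI \<phi> f
                 else if f \<in> mF \<phi> ` (flags G' - mF \<psi> ` flags G'')
                 then mF \<phi> (mI \<psi> (inv_into (flags G') (mF \<phi>) f))
                 else undefined) \<rparr>"

definition agg :: "('f, 'v) graph \<Rightarrow> ('f, 'v) graph" where
  "agg G = G\<lparr>inv := id\<rparr>"

definition adj :: "('f, 'v) graph \<Rightarrow> ('v \<times> 'v) set" where
  "adj G = {(bd G f, bd G (inv G f)) | f. f \<in> flags G}"

definition conn :: "('f, 'v) graph \<Rightarrow> ('v \<times> 'v) set" where
  "conn G = (adj G \<union> (adj G)\<inverse> \<union> Id_on (verts G))\<^sup>*"

definition comp_of :: "('f, 'v) graph \<Rightarrow> 'v \<Rightarrow> 'v set" where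
  "comp_of G v = conn G `` {v}"

definition components :: "('f, 'v) graph \<Rightarrow> 'v set set" where
  "components G = comp_of G ` verts G"

definition quot :: "('f, 'v) graph \<Rightarrow> ('f, 'v set) graph" where
  "quot G = \<lparr> flags = outer G, verts = components G,
              bd = (\<lambda>f. comp_of G (bd G f)), inv = id \<rparr>"

definition vmor :: "('f, 'v) graph \<Rightarrow> ('v, 'v set, 'f, 'f) gmor" where
  "vmor G = \<lparr> mV = restrict (comp_of G) (verts G),
              mF = restrict id (outer G),
              mI = restrict (inv G) (inner G) \<rparr>"

definition smor :: "('v1, 'v2, 'f1, 'f2) gmor \<Rightarrow> ('v1, 'v2, 'f1, 'f2) gmor" where
  "smor \<Phi> = \<lparr> mV = mV \<Phi>, mF = mF \<Phi>, mI = mI \<Phi> \<rparr>"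

definition tmor :: "('f1, 'v1) graph \<Rightarrow> ('f2, 'v2) graph \<Rightarrow>
    ('v1, 'v2, 'f1, 'f2) gmor \<Rightarrow> ('v1 set, 'v2 set, 'f1, 'f2) gmor" where
  "tmor G G' \<Phi> =
     \<lparr> mV = restrict (\<lambda>C. comp_of G' (mV \<Phi> (SOME v. v \<in> C))) (components G),
       mF = restrict (mF \<Phi>) (outer G'),
       mI = restrict (\<lambda>f. if f \<notin> mF \<Phi> ` flags G' then mI \<Phi> f
                         else mF \<Phi> (inv G' (inv_into (flags G') (mF \<Phi>) f)))
                     (outer G - mF \<Phi> ` outer G') \<rparr>"

end

theory Submission
  imports Defs
begin

text \<open>
  Since s(\<Phi>) is the triple \<Phi> itself, injectivity is immediate, and the content lies in
  two facts. First, for a graph morphism \<Phi>, the triple t(\<Phi>) is a morphism of total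
  contractions (its vertex map is well defined because \<Phi> maps connected vertices to
  connected vertices) and the square commutes. Second, if an aggregate morphism L fits
  into a commuting square with some R, then L is already a graph morphism and R = t(L).
  Both directions come from comparing the involution parts of R \<circ> v_\<Gamma> and v_\<Gamma>' \<circ> L
  flag by flag: on an inner flag of \<Gamma> the former is the involution of \<Gamma>, on an outer
  flag it is the involution of R; the latter is the involution of L off the image of L,
  and the transported involution of \<Gamma>' on the image of an inner flag.
\<close>

lemma is_graph_bd: "is_graph G \<Longrightarrow> f \<in> flags G \<Longrightarrow> bd G f \<in> verts G"
  and is_graph_inv: "is_graph G \<Longrightarrow> f \<in> flags G \<Longrightarrow> inv G f \<in> flags G"
  and is_graph_inv_inv: "is_graph G \<Longrightarrow> f \<in> flags G \<Longrightarrow> inv G (inv G f) = f"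
  unfolding is_graph_def by auto

lemma outer_subset_flags: "outer G \<subseteq> flags G"
  and inner_subset_flags: "inner G \<subseteq> flags G"
  and flags_diff_outer: "flags G - outer G = inner G"
  and inner_not_outer: "f \<in> inner G \<Longrightarrow> f \<notin> outer G"
  and flags_inner_or_outer: "f \<in> flags G \<Longrightarrow> f \<in> inner G \<or> f \<in> outer G"
  by (auto simp: outer_def inner_def)

subsection \<open>Connected components\<close>

lemma conn_refl: "(u, u) \<in> conn G"
  unfolding conn_def by simp

lemma conn_sym: "(u, v) \<in> conn G \<Longrightarrow> (v, u) \<in> conn G"
proof -
  have "sym (adj G \<union> (adj G)\<inverse> \<union> Id_on (verts G))"
    by (metis sym_Id_on sym_Un sym_Un_converse)
  then have "sym (conn G)"
    unfolding conn_def by (rule sym_rtrancl)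
  then show "(u, v) \<in> conn G \<Longrightarrow> (v, u) \<in> conn G"
    by (meson symD)
qed

lemma conn_trans: "(u, v) \<in> conn G \<Longrightarrow> (v, w) \<in> conn G \<Longrightarrow> (u, w) \<in> conn G"
  unfolding conn_def by simp

lemma conn_edge: "f \<in> flags G \<Longrightarrow> (bd G f, bd G (inv G f)) \<in> conn G"
  unfolding conn_def adj_def by blast

lemma comp_of_eq: "(u, v) \<in> conn G \<Longrightarrow> comp_of G u = comp_of G v"
  unfolding comp_of_def by (blast intro: conn_trans conn_sym)

lemma conn_some_comp_of: "(v, SOME u. u \<in> comp_of G v) \<in> conn G"
proof -
  have "v \<in> comp_of G v"
    unfolding comp_of_def by (simp add: conn_refl)
  then have "(SOME u. u \<in> comp_of G v) \<in> comp_of G v"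
    by (rule someI)
  then show ?thesis
    unfolding comp_of_def by simp
qed

lemma is_morphismD:
  assumes "is_morphism G G' \<phi>"
  shows morphism_mV: "mV \<phi> \<in> verts G \<rightarrow>\<^sub>E verts G'"
    and morphism_mV_surj: "mV \<phi> ` verts G = verts G'"
    and morphism_mF: "mF \<phi> \<in> flags G' \<rightarrow>\<^sub>E flags G"
    and morphism_mF_inj: "inj_on (mF \<phi>) (flags G')"
    and morphism_mI: "mI \<phi> \<in> (flags G - mF \<phi> ` flags G') \<rightarrow>\<^sub>E (flags G - mF \<phi> ` flags G')"
    and morphism_mI_involution:
      "\<forall>f\<in>flags G - mF \<phi> ` flags G'. mI \<phi> f \<noteq> f \<and> mI \<phi> (mI \<phi> f) = f"
    and morphism_bd_mF: "\<forall>f'\<in>flags G'. mV \<phi> (bd G (mF \<phi> f')) = bd G' f'"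
    and morphism_bd_mI:
      "\<forall>f\<in>flags G - mF \<phi> ` flags G'. mV \<phi> (bd G f) = mV \<phi> (bd G (mI \<phi> f))"
    and morphism_inv_mI: "\<forall>f\<in>flags G - mF \<phi> ` flags G'.
       (inv G f \<noteq> f \<and> mI \<phi> f = inv G f) \<or> (inv G f = f \<and> inv G (mI \<phi> f) = mI \<phi> f)"
    and morphism_inv_mF: "\<forall>f'\<in>flags G'.
       inv G (mF \<phi> f') \<noteq> mF \<phi> f' \<longrightarrow> inv G (mF \<phi> f') = mF \<phi> (inv G' f')"
  using assms by (simp_all add: is_morphism_def Let_def)

lemma is_morphismI:
  assumes "mV \<phi> \<in> verts G \<rightarrow>\<^sub>E verts G'"
    and "mV \<phi> ` verts G = verts G'"
    and "mF \<phi> \<in> flags G' \<rightarrow>\<^sub>E flags G"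
    and "inj_on (mF \<phi>) (flags G')"
    and "mI \<phi> \<in> (flags G - mF \<phi> ` flags G') \<rightarrow>\<^sub>E (flags G - mF \<phi> ` flags G')"
    and "\<forall>f\<in>flags G - mF \<phi> ` flags G'. mI \<phi> f \<noteq> f \<and> mI \<phi> (mI \<phi> f) = f"
    and "\<forall>f'\<in>flags G'. mV \<phi> (bd G (mF \<phi> f')) = bd G' f'"
    and "\<forall>f\<in>flags G - mF \<phi> ` flags G'. mV \<phi> (bd G f) = mV \<phi> (bd G (mI \<phi> f))"
    and "\<forall>f\<in>flags G - mF \<phi> ` flags G'.
       (inv G f \<noteq> f \<and> mI \<phi> f = inv G f) \<or> (inv G f = f \<and> inv G (mI \<phi> f) = mI \<phi> f)"
    and "\<forall>f'\<in>flags G'.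
       inv G (mF \<phi> f') \<noteq> mF \<phi> f' \<longrightarrow> inv G (mF \<phi> f') = mF \<phi> (inv G' f')"
  shows "is_morphism G G' \<phi>"
  using assms by (simp add: is_morphism_def Let_def)

lemma morphism_mF_outer:
  assumes "is_morphism G G' \<Phi>" and "f' \<in> outer G'"
  shows "mF \<Phi> f' \<in> outer G"
proof -
  have f': "f' \<in> flags G'" "inv G' f' = f'"
    using assms(2) unfolding outer_def by auto
  then have "inv G (mF \<Phi> f') = mF \<Phi> f'"
    using morphism_inv_mF[OF assms(1)] by auto
  moreover have "mF \<Phi> f' \<in> flags G"
    using morphism_mF[OF assms(1)] f'(1) by auto
  ultimately show ?thesis
    unfolding outer_def by simp
qed

lemma morphism_conn_edge:
  assumes m: "is_morphism G G' \<Phi>" and "is_graph G'" and f: "f \<in> flags G"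
  shows "(mV \<Phi> (bd G f), mV \<Phi> (bd G (inv G f))) \<in> conn G'"
proof (cases "inv G f = f")
  case True
  then show ?thesis by (simp add: conn_refl)
next
  case edge: False
  show ?thesis
  proof (cases "f \<in> mF \<Phi> ` flags G'")
    case True
    then obtain f' where f': "f' \<in> flags G'" "f = mF \<Phi> f'" by auto
    then have "inv G f = mF \<Phi> (inv G' f')"
      using morphism_inv_mF[OF m] edge by auto
    then show ?thesis
      using morphism_bd_mF[OF m] f' is_graph_inv[OF \<open>is_graph G'\<close>] conn_edge[OF f'(1)] by auto
  next
    case False
    then have "mI \<Phi> f = inv G f"
      using morphism_inv_mI[OF m] f edge by auto
    then have "mV \<Phi> (bd G f) = mV \<Phi> (bd G (inv G f))"
      using morphism_bd_mI[OF m] f False by auto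
    then show ?thesis by (simp add: conn_refl)
  qed
qed

lemma morphism_conn:
  assumes m: "is_morphism G G' \<Phi>" and "is_graph G'" and "(u, v) \<in> conn G"
  shows "(mV \<Phi> u, mV \<Phi> v) \<in> conn G'"
  using assms(3) unfolding conn_def[of G]
proof (induction rule: rtrancl_induct)
  case base
  then show ?case by (simp add: conn_refl)
next
  case (step y z)
  from step(2) have "(mV \<Phi> y, mV \<Phi> z) \<in> conn G'"
  proof (elim UnE)
    assume "(y, z) \<in> adj G"
    then show ?thesis
      unfolding adj_def using morphism_conn_edge[OF m \<open>is_graph G'\<close>] by auto
  next
    assume "(y, z) \<in> (adj G)\<inverse>"
    then show ?thesis
      unfolding adj_def using morphism_conn_edge[OF m \<open>is_graph G'\<close>] by (auto intro: conn_sym)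
  next
    assume "(y, z) \<in> Id_on (verts G)"
    then show ?thesis by (auto simp: conn_refl)
  qed
  with step(3) show ?case by (rule conn_trans)
qed

lemma agg_simps:
  "flags (agg G) = flags G" "verts (agg G) = verts G" "bd (agg G) = bd G" "inv (agg G) = id"
  by (simp_all add: agg_def)

lemma is_morphism_agg: "is_morphism G G' \<Phi> \<Longrightarrow> is_morphism (agg G) (agg G') \<Phi>"
  by (rule is_morphismI, simp_all only: agg_simps id_apply) (use is_morphismD[of G G' \<Phi>] in auto)

subsection \<open>Total contraction\<close>

lemma quot_simps:
  "flags (quot G) = outer G" "verts (quot G) = components G"
  "bd (quot G) = (\<lambda>f. comp_of G (bd G f))" "inv (quot G) = id"
  by (simp_all add: quot_def)

definition tinv :: "('f2, 'v2) graph \<Rightarrow> ('v1, 'v2, 'f1, 'f2) gmor \<Rightarrow> 'f1 \<Rightarrow> 'f1" where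
  "tinv G' \<Phi> f = (if f \<notin> mF \<Phi> ` flags G' then mI \<Phi> f
                   else mF \<Phi> (inv G' (inv_into (flags G') (mF \<Phi>) f)))"

lemma tmor_simps:
  "mV (tmor G G' \<Phi>) = restrict (\<lambda>C. comp_of G' (mV \<Phi> (SOME v. v \<in> C))) (components G)"
  "mF (tmor G G' \<Phi>) = restrict (mF \<Phi>) (outer G')"
  "mI (tmor G G' \<Phi>) = restrict (tinv G' \<Phi>) (outer G - mF \<Phi> ` outer G')"
  unfolding tmor_def by (simp_all add: restrict_def tinv_def fun_eq_iff)

lemma tmor_mV_comp_of:
  assumes m: "is_morphism G G' \<Phi>" and "is_graph G'" and "v \<in> verts G"
  shows "mV (tmor G G' \<Phi>) (comp_of G v) = comp_of G' (mV \<Phi> v)"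
proof -
  have "comp_of G v \<in> components G"
    using assms(3) unfolding components_def by simp
  then have "mV (tmor G G' \<Phi>) (comp_of G v) = comp_of G' (mV \<Phi> (SOME u. u \<in> comp_of G v))"
    by (simp add: tmor_simps)
  also have "\<dots> = comp_of G' (mV \<Phi> v)"
    using morphism_conn[OF m \<open>is_graph G'\<close> conn_some_comp_of] by (metis comp_of_eq)
  finally show ?thesis .
qed

lemma tmor_mV_image:
  assumes m: "is_morphism G G' \<Phi>" and "is_graph G'"
  shows "mV (tmor G G' \<Phi>) ` components G = components G'"
proof -
  have "mV (tmor G G' \<Phi>) ` components G = comp_of G' ` mV \<Phi> ` verts G"
    unfolding components_def image_image
    using tmor_mV_comp_of[OF assms] by (auto simp: image_iff)
  then show ?thesis
    unfolding components_def morphism_mV_surj[OF m] .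
qed

lemma tinv_outer_unmatched:
  assumes m: "is_morphism G G' \<Phi>"
    and fo: "f \<in> outer G" and fn: "f \<notin> mF \<Phi> ` flags G'"
  shows "tinv G' \<Phi> f \<in> outer G - mF \<Phi> ` outer G' \<and> tinv G' \<Phi> f \<noteq> f
     \<and> tinv G' \<Phi> (tinv G' \<Phi> f) = f
     \<and> (mV \<Phi> (bd G f), mV \<Phi> (bd G (tinv G' \<Phi> f))) \<in> conn G'"
proof -
  have fX: "f \<in> flags G - mF \<Phi> ` flags G'" "inv G f = f"
    using fo fn unfolding outer_def by auto
  define g where "g = mI \<Phi> f"
  have gX: "g \<in> flags G - mF \<Phi> ` flags G'"
    using morphism_mI[OF m] fX(1) unfolding g_def by auto
  have gf: "g \<noteq> f" "mI \<Phi> g = f"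
    using morphism_mI_involution[OF m] fX(1) unfolding g_def by auto
  have "inv G g = g"
    using morphism_inv_mI[OF m] fX unfolding g_def by auto
  then have "g \<in> outer G - mF \<Phi> ` outer G'"
    using gX outer_subset_flags[of G'] unfolding outer_def by auto
  moreover have "tinv G' \<Phi> f = g" "tinv G' \<Phi> g = f"
    using fn gX gf unfolding tinv_def g_def by simp_all
  moreover have "mV \<Phi> (bd G f) = mV \<Phi> (bd G g)"
    using morphism_bd_mI[OF m] fX(1) unfolding g_def by auto
  ultimately show ?thesis
    using gf conn_refl by auto
qed

text \<open>
  The image of one half of an edge of \<Gamma>' is paired by t(\<Phi>) with the image of the other half.
\<close>
lemma tinv_outer_edge:
  assumes "is_graph G" and "is_graph G'" and m: "is_morphism G G' \<Phi>"
    and "f \<in> outer G" and f': "f' \<in> inner G'" "f = mF \<Phi> f'"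
  shows "tinv G' \<Phi> f \<in> outer G - mF \<Phi> ` outer G' \<and> tinv G' \<Phi> f \<noteq> f
     \<and> tinv G' \<Phi> (tinv G' \<Phi> f) = f
     \<and> (mV \<Phi> (bd G f), mV \<Phi> (bd G (tinv G' \<Phi> f))) \<in> conn G'"
proof -
  have inj: "inj_on (mF \<Phi>) (flags G')"
    by (rule morphism_mF_inj[OF m])
  have f'F: "f' \<in> flags G'"
    using f'(1) inner_subset_flags[of G'] by blast
  have h: "inv G' f' \<in> inner G'" "inv G' (inv G' f') = f'"
    using f' is_graph_inv[OF \<open>is_graph G'\<close>] is_graph_inv_inv[OF \<open>is_graph G'\<close>]
    unfolding inner_def by auto
  then have hF: "inv G' f' \<in> flags G'"
    using inner_subset_flags[of G'] by blast
  define g where "g = mF \<Phi> (inv G' f')"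
  have gF: "g \<in> flags G"
    using morphism_mF[OF m] hF unfolding g_def by auto
  have "inv G f = f"
    using \<open>f \<in> outer G\<close> unfolding outer_def by simp
  have "inv G g = g"
  proof (rule ccontr)
    assume "inv G g \<noteq> g"
    then have "inv G g = f"
      using morphism_inv_mF[OF m] hF h(2) f'(2) unfolding g_def by auto
    then have "g = f"
      using is_graph_inv_inv[OF \<open>is_graph G\<close> gF] \<open>inv G f = f\<close> by simp
    with \<open>inv G g \<noteq> g\<close> \<open>inv G f = f\<close> show False by simp
  qed
  moreover have "g \<notin> mF \<Phi> ` outer G'"
    using inj_on_image_mem_iff[OF inj hF outer_subset_flags] h(1) inner_not_outer[of _ G']
    unfolding g_def by blast
  moreover have "g \<noteq> f"
    using inj_onD[OF inj] hF f'F f' unfolding g_def inner_def by auto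
  moreover have "tinv G' \<Phi> f = g" "tinv G' \<Phi> g = f"
    using inv_into_f_f[OF inj f'F] inv_into_f_f[OF inj hF] h(2) hF f'F f'(2)
    unfolding tinv_def g_def by auto
  moreover have "mV \<Phi> (bd G f) = bd G' f'" "mV \<Phi> (bd G g) = bd G' (inv G' f')"
    using morphism_bd_mF[OF m] f'F hF f'(2) unfolding g_def by auto
  ultimately show ?thesis
    using gF conn_edge[OF f'F] unfolding outer_def by auto
qed

lemma tinv_outer:
  assumes "is_graph G" and "is_graph G'" and m: "is_morphism G G' \<Phi>"
    and fo: "f \<in> outer G - mF \<Phi> ` outer G'"
  shows "tinv G' \<Phi> f \<in> outer G - mF \<Phi> ` outer G' \<and> tinv G' \<Phi> f \<noteq> f
     \<and> tinv G' \<Phi> (tinv G' \<Phi> f) = f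
     \<and> (mV \<Phi> (bd G f), mV \<Phi> (bd G (tinv G' \<Phi> f))) \<in> conn G'"
proof (cases "f \<in> mF \<Phi> ` flags G'")
  case False
  with fo show ?thesis
    using tinv_outer_unmatched[OF m] by blast
next
  case True
  then obtain f' where f': "f' \<in> flags G'" "f = mF \<Phi> f'" by auto
  with fo have "f' \<in> inner G'"
    using flags_inner_or_outer[of f' G'] by auto
  with fo f' show ?thesis
    using tinv_outer_edge[OF assms(1-3)] by blast
qed

lemma is_morphism_tmor:
  assumes "is_graph G" and "is_graph G'" and m: "is_morphism G G' \<Phi>"
  shows "is_morphism (quot G) (quot G') (tmor G G' \<Phi>)"
proof -
  let ?T = "tmor G G' \<Phi>"
  let ?X = "outer G - mF \<Phi> ` outer G'"
  have T_comp: "v \<in> verts G \<Longrightarrow> mV ?T (comp_of G v) = comp_of G' (mV \<Phi> v)" for v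
    by (rule tmor_mV_comp_of[OF m \<open>is_graph G'\<close>])
  have T_bd: "f \<in> flags G \<Longrightarrow> mV ?T (comp_of G (bd G f)) = comp_of G' (mV \<Phi> (bd G f))" for f
    using T_comp is_graph_bd[OF \<open>is_graph G\<close>] by simp
  have T_mF: "f' \<in> outer G' \<Longrightarrow> mF ?T f' = mF \<Phi> f'" for f'
    by (simp add: tmor_simps)
  have T_mI: "f \<in> ?X \<Longrightarrow> mI ?T f = tinv G' \<Phi> f" for f
    by (simp add: tmor_simps)
  have mF_image: "mF ?T ` outer G' = mF \<Phi> ` outer G'"
    by (simp add: tmor_simps)
  note tinv_X = tinv_outer[OF assms]
  show ?thesis
  proof (rule is_morphismI, unfold quot_simps mF_image)
    show "mV ?T ` components G = components G'"
      by (rule tmor_mV_image[OF m \<open>is_graph G'\<close>])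
    then show "mV ?T \<in> components G \<rightarrow>\<^sub>E components G'"
      by (auto simp: tmor_simps)
    show "mF ?T \<in> outer G' \<rightarrow>\<^sub>E outer G"
      using morphism_mF_outer[OF m] by (auto simp: tmor_simps)
    show "inj_on (mF ?T) (outer G')"
      using morphism_mF_inj[OF m] outer_subset_flags[of G']
      by (auto simp: tmor_simps inj_on_def)
    show "mI ?T \<in> ?X \<rightarrow>\<^sub>E ?X"
      using tinv_X by (auto simp: tmor_simps)
    show "\<forall>f\<in>?X. mI ?T f \<noteq> f \<and> mI ?T (mI ?T f) = f"
      using tinv_X by (auto simp: tmor_simps)
    show "\<forall>f'\<in>outer G'. mV ?T (comp_of G (bd G (mF ?T f'))) = comp_of G' (bd G' f')"
      using T_bd T_mF morphism_bd_mF[OF m] morphism_mF_outer[OF m] outer_subset_flags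
      by (metis subsetD)
    show "\<forall>f\<in>?X. mV ?T (comp_of G (bd G f)) = mV ?T (comp_of G (bd G (mI ?T f)))"
    proof
      fix f
      assume f: "f \<in> ?X"
      then have "f \<in> flags G" "tinv G' \<Phi> f \<in> flags G"
        using tinv_X outer_subset_flags[of G] by auto
      then show "mV ?T (comp_of G (bd G f)) = mV ?T (comp_of G (bd G (mI ?T f)))"
        using T_bd T_mI[OF f] tinv_X[OF f] comp_of_eq by metis
    qed
  qed simp_all
qed

subsection \<open>The square\<close>

lemma mV_gcomp_after_vmor:
  "mV (gcomp (agg G) (quot G) (quot G') R (vmor G)) = restrict (\<lambda>v. mV R (comp_of G v)) (verts G)"
  by (simp add: gcomp_def vmor_def agg_simps fun_eq_iff)

lemma mF_gcomp_after_vmor: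
  "mF (gcomp (agg G) (quot G) (quot G') R (vmor G))
     = restrict (\<lambda>f'. restrict id (outer G) (mF R f')) (outer G')"
  by (simp add: gcomp_def vmor_def quot_simps fun_eq_iff)

lemma mI_gcomp_after_vmor:
  "mI (gcomp (agg G) (quot G) (quot G') R (vmor G)) f =
     (if f \<in> inner G then inv G f
      else if f \<in> outer G - mF R ` outer G' then restrict id (outer G) (mI R f)
      else undefined)"
proof -
  have "flags G - restrict id (outer G) ` outer G = inner G"
    using flags_diff_outer by simp
  moreover have "restrict id (outer G) ` (outer G - mF R ` outer G') = outer G - mF R ` outer G'"
    by auto
  moreover have "g \<in> outer G \<Longrightarrow> inv_into (outer G) (restrict id (outer G)) g = g" for g
    using inv_into_f_f[of "restrict id (outer G)" "outer G" g] by (simp add: inj_on_def)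
  ultimately show ?thesis
    unfolding gcomp_def vmor_def gmor.select_convs agg_simps quot_simps
    using inner_not_outer by (auto simp: restrict_def)
qed

lemma mV_gcomp_vmor_after:
  "mV (gcomp (agg G) (agg G') (quot G') (vmor G') L)
     = restrict (\<lambda>v. restrict (comp_of G') (verts G') (mV L v)) (verts G)"
  by (simp add: gcomp_def vmor_def agg_simps fun_eq_iff)

lemma mF_gcomp_vmor_after:
  "mF (gcomp (agg G) (agg G') (quot G') (vmor G') L) = restrict (mF L) (outer G')"
  by (simp add: gcomp_def vmor_def quot_simps fun_eq_iff)

lemma mI_gcomp_vmor_after:
  assumes "inj_on (mF L) (flags G')"
  shows "mI (gcomp (agg G) (agg G') (quot G') (vmor G') L) f =
     (if f \<in> flags G - mF L ` flags G' then mI L f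
      else if f \<in> mF L ` inner G' then mF L (inv G' (inv_into (flags G') (mF L) f))
      else undefined)"
proof -
  have "flags G' - restrict id (outer G') ` outer G' = inner G'"
    using flags_diff_outer by simp
  moreover have "g \<in> mF L ` inner G' \<Longrightarrow> inv_into (flags G') (mF L) g \<in> inner G'" for g
    using inv_into_f_f[OF assms] inner_subset_flags by fastforce
  ultimately show ?thesis
    unfolding gcomp_def vmor_def gmor.select_convs agg_simps quot_simps
    by (auto simp: restrict_def)
qed

lemma mI_gcomp_vmor_after_morphism:
  assumes "is_graph G" and "is_graph G'" and m: "is_morphism G G' \<Phi>"
  shows "mI (gcomp (agg G) (agg G') (quot G') (vmor G') \<Phi>) f =
     (if f \<in> inner G then inv G f
      else if f \<in> outer G - mF \<Phi> ` outer G' then tinv G' \<Phi> f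
      else undefined)"
proof -
  have inj: "inj_on (mF \<Phi>) (flags G')"
    by (rule morphism_mF_inj[OF m])
  note rhs = mI_gcomp_vmor_after[OF inj, of G f]
  show ?thesis
  proof (cases "f \<in> mF \<Phi> ` flags G'")
    case False
    then have "f \<notin> mF \<Phi> ` inner G'" "f \<notin> mF \<Phi> ` outer G'"
      using inner_subset_flags[of G'] outer_subset_flags[of G'] by auto
    moreover have "f \<in> inner G \<Longrightarrow> mI \<Phi> f = inv G f"
      using False morphism_inv_mI[OF m] unfolding inner_def by auto
    ultimately show ?thesis
      unfolding rhs tinv_def using False flags_inner_or_outer[of f G] outer_subset_flags[of G]
        inner_subset_flags[of G] inner_not_outer[of f G]
      by auto
  next
    case True
    then obtain f' where f': "f' \<in> flags G'" "f = mF \<Phi> f'" by auto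
    have f_image: "f \<in> mF \<Phi> ` A \<longleftrightarrow> f' \<in> A" if "A \<subseteq> flags G'" for A
      using inj_on_image_mem_iff[OF inj f'(1) that] f'(2) by simp
    have inv_f: "inv_into (flags G') (mF \<Phi>) f = f'"
      using inv_into_f_f[OF inj f'(1)] f'(2) by simp
    then have tinv_f: "tinv G' \<Phi> f = mF \<Phi> (inv G' f')"
      using True unfolding tinv_def by simp
    show ?thesis
    proof (cases "f' \<in> outer G'")
      case True
      then show ?thesis
        unfolding rhs using morphism_mF_outer[OF m] f' f_image[OF inner_subset_flags]
          f_image[OF outer_subset_flags] inner_not_outer[of f G] inner_not_outer[of f' G']
        by auto
    next
      case False
      with f' have "f' \<in> inner G'"
        using flags_inner_or_outer[of f' G'] by blast
      moreover have "f \<in> inner G \<Longrightarrow> inv G f = mF \<Phi> (inv G' f')"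
        using morphism_inv_mF[OF m] f' unfolding inner_def by auto
      ultimately show ?thesis
        unfolding rhs tinv_f inv_f using f' False f_image[OF inner_subset_flags]
          f_image[OF outer_subset_flags] flags_inner_or_outer[of f G] morphism_mF[OF m]
        by auto
    qed
  qed
qed

lemma tmor_square:
  assumes "is_graph G" and "is_graph G'" and m: "is_morphism G G' \<Phi>"
  shows "gcomp (agg G) (quot G) (quot G') (tmor G G' \<Phi>) (vmor G)
       = gcomp (agg G) (agg G') (quot G') (vmor G') \<Phi>"
proof (rule gmor.equality)
  show "mV (gcomp (agg G) (quot G) (quot G') (tmor G G' \<Phi>) (vmor G))
      = mV (gcomp (agg G) (agg G') (quot G') (vmor G') \<Phi>)"
    unfolding mV_gcomp_after_vmor mV_gcomp_vmor_after
    using tmor_mV_comp_of[OF m \<open>is_graph G'\<close>] morphism_mV[OF m] by (auto simp: fun_eq_iff)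
  show "mF (gcomp (agg G) (quot G) (quot G') (tmor G G' \<Phi>) (vmor G))
      = mF (gcomp (agg G) (agg G') (quot G') (vmor G') \<Phi>)"
    unfolding mF_gcomp_after_vmor mF_gcomp_vmor_after tmor_simps
    using morphism_mF_outer[OF m] by (auto simp: fun_eq_iff)
  have "mF (tmor G G' \<Phi>) ` outer G' = mF \<Phi> ` outer G'"
    by (simp add: tmor_simps)
  then show "mI (gcomp (agg G) (quot G) (quot G') (tmor G G' \<Phi>) (vmor G))
      = mI (gcomp (agg G) (agg G') (quot G') (vmor G') \<Phi>)"
    unfolding fun_eq_iff mI_gcomp_after_vmor mI_gcomp_vmor_after_morphism[OF assms]
    using tinv_outer[OF assms] by (auto simp: tmor_simps)
qed simp

context
  fixes G :: "('f, 'v) graph" and G' :: "('g, 'w) graph"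
    and L :: "('v, 'w, 'f, 'g) gmor" and R :: "('v set, 'w set, 'f, 'g) gmor"
  assumes mL: "is_morphism (agg G) (agg G') L"
    and mR: "is_morphism (quot G) (quot G') R"
    and square: "gcomp (agg G) (quot G) (quot G') R (vmor G)
               = gcomp (agg G) (agg G') (quot G') (vmor G') L"
begin

lemma square_inj: "inj_on (mF L) (flags G')"
  using morphism_mF_inj[OF mL] by (simp add: agg_simps)

lemma square_mV: "v \<in> verts G \<Longrightarrow> mV R (comp_of G v) = comp_of G' (mV L v)"
  using fun_cong[OF arg_cong[OF square, of mV], of v] morphism_mV[OF mL]
  unfolding mV_gcomp_after_vmor mV_gcomp_vmor_after by (auto simp: agg_simps)

lemma square_mF:
  assumes "f' \<in> outer G'"
  shows "mF R f' = mF L f'"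
proof -
  have "mF R f' \<in> outer G"
    using morphism_mF[OF mR] assms by (auto simp: quot_simps)
  with assms show ?thesis
    using fun_cong[OF arg_cong[OF square, of mF], of f']
    unfolding mF_gcomp_after_vmor mF_gcomp_vmor_after by simp
qed

lemma square_mI:
  "(if f \<in> inner G then inv G f
    else if f \<in> outer G - mF R ` outer G' then restrict id (outer G) (mI R f)
    else undefined)
 = (if f \<in> flags G - mF L ` flags G' then mI L f
    else if f \<in> mF L ` inner G' then mF L (inv G' (inv_into (flags G') (mF L) f))
    else undefined)"
  using fun_cong[OF arg_cong[OF square, of mI], of f]
  unfolding mI_gcomp_after_vmor mI_gcomp_vmor_after[OF square_inj] .

lemma square_mF_outer_image: "mF R ` outer G' = mF L ` outer G'"
  using square_mF by (auto simp: image_def)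

lemma square_mI_outer:
  assumes f: "f \<in> outer G - mF L ` outer G'"
  shows "mI R f = tinv G' L f"
proof -
  have fR: "f \<in> outer G - mF R ` outer G'"
    using f square_mF_outer_image by simp
  then have "mI R f \<in> outer G"
    using morphism_mI[OF mR] by (auto simp: quot_simps)
  moreover have "f \<notin> inner G"
    using f inner_not_outer[of f G] by blast
  ultimately have eq: "mI R f = (if f \<in> flags G - mF L ` flags G' then mI L f
      else if f \<in> mF L ` inner G' then mF L (inv G' (inv_into (flags G') (mF L) f))
      else undefined)"
    using square_mI[of f] fR by simp
  show ?thesis
  proof (cases "f \<in> mF L ` flags G'")
    case False
    then show ?thesis
      using eq f outer_subset_flags[of G] by (auto simp: tinv_def)
  next
    case True
    then obtain f' where f': "f' \<in> flags G'" "f = mF L f'" by auto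
    then have "f' \<in> inner G'"
      using f flags_inner_or_outer[of f' G'] by auto
    then show ?thesis
      using eq f' True by (auto simp: tinv_def)
  qed
qed

lemma square_inv_mI:
  assumes f: "f \<in> flags G - mF L ` flags G'"
  shows "(inv G f \<noteq> f \<and> mI L f = inv G f) \<or> (inv G f = f \<and> inv G (mI L f) = mI L f)"
proof (cases "f \<in> inner G")
  case True
  then have "mI L f = inv G f"
    using square_mI[of f] f by auto
  with True show ?thesis
    unfolding inner_def by auto
next
  case False
  then have fX: "f \<in> outer G - mF L ` outer G'"
    using f flags_inner_or_outer[of f G] outer_subset_flags[of G'] by auto
  then have "mI L f = mI R f"
    using square_mI_outer f by (simp add: tinv_def)
  moreover have "mI R f \<in> outer G"
    using morphism_mI[OF mR] fX square_mF_outer_image by (auto simp: quot_simps)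
  ultimately show ?thesis
    using fX unfolding outer_def by auto
qed

lemma square_inv_mF:
  assumes f': "f' \<in> flags G'" and edge: "inv G (mF L f') \<noteq> mF L f'"
  shows "inv G (mF L f') = mF L (inv G' f')"
proof -
  have "mF L f' \<in> inner G"
    using morphism_mF[OF mL] f' edge unfolding inner_def by (auto simp: agg_simps)
  moreover have "mF R f' \<in> outer G" if "f' \<in> outer G'"
    using morphism_mF[OF mR] that by (auto simp: quot_simps)
  ultimately have "f' \<notin> outer G'"
    using square_mF inner_not_outer[of "mF L f'" G] by auto
  then have "f' \<in> inner G'"
    using flags_inner_or_outer[of f' G'] f' by auto
  with \<open>mF L f' \<in> inner G\<close> show ?thesis
    using square_mI[of "mF L f'"] f' inv_into_f_f[OF square_inj f'] by auto
qed

lemma is_morphism_of_square: "is_morphism G G' L"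
  by (rule is_morphismI)
    (use is_morphismD[OF mL, unfolded agg_simps] square_inv_mI square_inv_mF in auto)

lemma tmor_of_square:
  assumes "is_graph G'"
  shows "tmor G G' L = R"
proof (rule gmor.equality)
  show "mV (tmor G G' L) = mV R"
  proof
    fix C
    show "mV (tmor G G' L) C = mV R C"
    proof (cases "C \<in> components G")
      case True
      then obtain v where "v \<in> verts G" "C = comp_of G v"
        unfolding components_def by auto
      then show ?thesis
        using tmor_mV_comp_of[OF is_morphism_of_square assms] square_mV by simp
    next
      case False
      then show ?thesis
        using morphism_mV[OF mR] by (auto simp: tmor_simps quot_simps PiE_def extensional_def)
    qed
  qed
  show "mF (tmor G G' L) = mF R"
    using square_mF morphism_mF[OF mR]
    by (auto simp: tmor_simps quot_simps PiE_def extensional_def fun_eq_iff)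
  show "mI (tmor G G' L) = mI R"
    using square_mI_outer morphism_mI[OF mR] square_mF_outer_image
    by (auto simp: tmor_simps quot_simps PiE_def extensional_def fun_eq_iff)
qed simp

end

lemma smor_eq: "smor \<Phi> = \<Phi>"
  by (cases \<Phi>) (simp add: smor_def)

theorem proposition2p12:
  fixes G :: "('f, 'v) graph" and G' :: "('g, 'w) graph"
  assumes "is_graph G" and "is_graph G'"
  shows "bij_betw (\<lambda>\<Phi>. (smor \<Phi>, tmor G G' \<Phi>))
           {\<Phi>. is_morphism G G' \<Phi>}
           {(L, R). is_morphism (agg G) (agg G') L
                  \<and> is_morphism (quot G) (quot G') R
                  \<and> gcomp (agg G) (quot G) (quot G') R (vmor G)
                    = gcomp (agg G) (agg G') (quot G') (vmor G') L}"
proof (rule bij_betw_imageI)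
  show "inj_on (\<lambda>\<Phi>. (smor \<Phi>, tmor G G' \<Phi>)) {\<Phi>. is_morphism G G' \<Phi>}"
    by (rule inj_onI) (simp add: smor_eq)
  have "(L, R) \<in> (\<lambda>\<Phi>. (smor \<Phi>, tmor G G' \<Phi>)) ` {\<Phi>. is_morphism G G' \<Phi>}"
    if "is_morphism (agg G) (agg G') L" "is_morphism (quot G) (quot G') R"
      "gcomp (agg G) (quot G) (quot G') R (vmor G) = gcomp (agg G) (agg G') (quot G') (vmor G') L"
    for L R
    using is_morphism_of_square[OF that] tmor_of_square[OF that \<open>is_graph G'\<close>]
    by (auto simp: smor_eq image_iff)
  then show "(\<lambda>\<Phi>. (smor \<Phi>, tmor G G' \<Phi>)) ` {\<Phi>. is_morphism G G' \<Phi>} = {(L, R).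
      is_morphism (agg G) (agg G') L \<and> is_morphism (quot G) (quot G') R
    \<and> gcomp (agg G) (quot G) (quot G') R (vmor G) = gcomp (agg G) (agg G') (quot G') (vmor G') L}"
    using is_morphism_agg is_morphism_tmor[OF assms] tmor_square[OF assms]
    by (auto simp: smor_eq)
qed

end
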